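(* For every finite simple graph $G$, $\varphi(G)\ge W(G)$.
   Context: Graphs are finite, undirected, without loops or multiple edges; $n=|V(G)|$ and $d(v)$ is the degree of $v$. For $V\subseteq V(G)$ define $W(V)=\sum_{v\in V}\frac{1}{n-d(v)}$ and $W(G)=W(V(G))$. A set $V\subseteq V(G)$ is a $\delta$-set in $G$ if $d(v)\le n-|V|$ for all $v\in V$. $G$ is called a generalized $r$-partite graph if $V(G)=V_1\cup\dots\cup V_r$ with $V_i\cap V_j=\emptyset$ for $i\ne j$, where each $V_i$ is a $\delta$-set in $G$. $\varphi(G)$ denotes the smallest integer $r$ such that $G$ is a generalized $r$-partite graph. *)

theory Defs
  imports Complex_Main
begin

definition simple_graph :: "'a set \<Rightarrow> ('a \<Rightarrow> 'a \<Rightarrow> bool) \<Rightarrow> bool" where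
  "simple_graph V E \<longleftrightarrow> finite V \<and> (\<forall>u v. E u v \<longrightarrow> u \<in> V \<and> v \<in> V)
     \<and> (\<forall>u v. E u v \<longrightarrow> E v u) \<and> (\<forall>v. \<not> E v v)"

definition degree :: "'a set \<Rightarrow> ('a \<Rightarrow> 'a \<Rightarrow> bool) \<Rightarrow> 'a \<Rightarrow> nat" where
  "degree V E v = card {u \<in> V. E v u}"

definition W_set :: "'a set \<Rightarrow> ('a \<Rightarrow> 'a \<Rightarrow> bool) \<Rightarrow> 'a set \<Rightarrow> real" where
  "W_set V E S = (\<Sum>v\<in>S. 1 / real (card V - degree V E v))"

definition W_graph :: "'a set \<Rightarrow> ('a \<Rightarrow> 'a \<Rightarrow> bool) \<Rightarrow> real" where
  "W_graph V E = W_set V E V"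

definition delta_set :: "'a set \<Rightarrow> ('a \<Rightarrow> 'a \<Rightarrow> bool) \<Rightarrow> 'a set \<Rightarrow> bool" where
  "delta_set V E S \<longleftrightarrow> S \<subseteq> V \<and> (\<forall>v\<in>S. degree V E v \<le> card V - card S)"

definition gen_partite :: "'a set \<Rightarrow> ('a \<Rightarrow> 'a \<Rightarrow> bool) \<Rightarrow> nat \<Rightarrow> bool" where
  "gen_partite V E r \<longleftrightarrow> (\<exists>P :: nat \<Rightarrow> 'a set.
      (\<Union>i<r. P i) = V \<and> (\<forall>i<r. \<forall>j<r. i \<noteq> j \<longrightarrow> P i \<inter> P j = {})
      \<and> (\<forall>i<r. delta_set V E (P i)))"

definition phi :: "'a set \<Rightarrow> ('a \<Rightarrow> 'a \<Rightarrow> bool) \<Rightarrow> nat" where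
  "phi V E = (LEAST r. gen_partite V E r)"

end

theory Submission
  imports Defs
begin

text \<open>Each vertex v of a \<delta>-set S satisfies n - d(v) \<ge> |S|, so W(S) \<le> |S| \<cdot> 1/|S| = 1.
  Summing over the parts of a generalized r-partition gives W(G) \<le> r, in particular for
  r = \<phi>(G); the partition into singletons shows that \<phi>(G) is attained.\<close>

lemma degree_le_card_minus_one:
  assumes "simple_graph V E" "v \<in> V"
  shows "degree V E v \<le> card V - 1"
proof -
  have "finite V" using assms(1) by (simp add: simple_graph_def)
  moreover have "{u \<in> V. E v u} \<subseteq> V - {v}" using assms(1) by (auto simp: simple_graph_def)
  ultimately have "card {u \<in> V. E v u} \<le> card (V - {v})" by (intro card_mono) auto
  thus ?thesis using assms(2) by (simp add: degree_def)
qed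

lemma delta_set_singleton:
  assumes "simple_graph V E" "v \<in> V"
  shows "delta_set V E {v}"
  using degree_le_card_minus_one[OF assms] assms(2) by (simp add: delta_set_def)

lemma gen_partite_card:
  assumes "simple_graph V E"
  shows "gen_partite V E (card V)"
proof -
  have "finite V" using assms by (simp add: simple_graph_def)
  then obtain h where h: "bij_betw h {..<card V} V"
    using ex_bij_betw_nat_finite lessThan_atLeast0 by metis
  have "(\<Union>i<card V. {h i}) = V" using h by (auto simp: bij_betw_def)
  moreover have "\<forall>i<card V. \<forall>j<card V. i \<noteq> j \<longrightarrow> {h i} \<inter> {h j} = {}"
    using h by (auto simp: bij_betw_def inj_on_def)
  moreover have "\<forall>i<card V. delta_set V E {h i}"
    using h delta_set_singleton[OF assms] by (auto dest: bij_betwE)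
  ultimately show ?thesis unfolding gen_partite_def by blast
qed

lemma W_set_le_one_if_delta_set:
  assumes "finite V" "delta_set V E S"
  shows "W_set V E S \<le> 1"
proof (cases "S = {}")
  case True
  thus ?thesis by (simp add: W_set_def)
next
  case False
  have "S \<subseteq> V" using assms(2) by (simp add: delta_set_def)
  hence "finite S" and card_S: "card S \<le> card V"
    using assms(1) by (auto intro: finite_subset card_mono)
  with False have pos: "card S > 0" by (simp add: card_gt_0_iff)
  have "W_set V E S \<le> (\<Sum>v\<in>S. 1 / real (card S))"
    unfolding W_set_def
  proof (rule sum_mono)
    fix v assume "v \<in> S"
    hence "degree V E v \<le> card V - card S" using assms(2) by (simp add: delta_set_def)
    hence "real (card S) \<le> real (card V - degree V E v)" using card_S by simp
    thus "1 / real (card V - degree V E v) \<le> 1 / real (card S)"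
      using pos by (intro divide_left_mono) auto
  qed
  also have "\<dots> = 1" using pos by simp
  finally show ?thesis .
qed

lemma W_graph_le_if_gen_partite:
  assumes "finite V" "gen_partite V E r"
  shows "W_graph V E \<le> real r"
proof -
  obtain P where cover: "(\<Union>i<r. P i) = V"
    and disjoint: "\<forall>i<r. \<forall>j<r. i \<noteq> j \<longrightarrow> P i \<inter> P j = {}"
    and delta: "\<forall>i<r. delta_set V E (P i)"
    using assms(2) unfolding gen_partite_def by blast
  have "\<forall>i\<in>{..<r}. finite (P i)"
    using delta assms(1) by (auto simp: delta_set_def intro: finite_subset)
  hence "W_graph V E = (\<Sum>i<r. W_set V E (P i))"
    unfolding W_graph_def W_set_def cover[symmetric] using disjoint
    by (subst sum.UNION_disjoint) auto
  also have "\<dots> \<le> (\<Sum>i<r. 1)"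
    using delta W_set_le_one_if_delta_set[OF assms(1)] by (intro sum_mono) auto
  finally show ?thesis by simp
qed

theorem proposition2:
  fixes V :: "'a set" and E :: "'a \<Rightarrow> 'a \<Rightarrow> bool"
  assumes "simple_graph V E"
  shows "real (phi V E) \<ge> W_graph V E"
proof -
  have "gen_partite V E (phi V E)"
    unfolding phi_def using gen_partite_card[OF assms] by (rule LeastI)
  moreover have "finite V" using assms by (simp add: simple_graph_def)
  ultimately show ?thesis by (rule W_graph_le_if_gen_partite[rotated])
qed

end
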